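(* Let $d_1,d_2\in\mathbb{Z}$ with $d_2>d_1\ge0$, and let $f(z)=z^{d_1}$, $z\in\mathbb{S}^1$. Then $|f-g|_{H^{1/2}}^2\ge4\pi^2(d_2-d_1)$ for all $g\in\mathcal{E}_{d_2}$.
   Context: $\mathbb{S}^1\subset\mathbb{C}$ with arclength measure. $H^{1/2}(\mathbb{S}^1;\mathbb{S}^1)=\{g\in H^{1/2}(\mathbb{S}^1;\mathbb{C}):|g|=1\text{ a.e.}\}$; such maps have a well-defined degree (the unique extension of the degree of smooth maps continuous in $H^{1/2}$). $\mathcal{E}_d=\{g\in H^{1/2}(\mathbb{S}^1;\mathbb{S}^1):\deg g=d\}$. $|h|_{H^{1/2}}^2=\int_{\mathbb{S}^1}\int_{\mathbb{S}^1}\frac{|h(x)-h(y)|^2}{|x-y|^2}dx\,dy$ with $|x-y|$ the Euclidean distance in $\mathbb{R}^2$. *)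

theory Defs
  imports "HOL-Analysis.Analysis" "HOL-Complex_Analysis.Complex_Analysis"
begin

text \<open>Maps on the unit circle are represented as functions complex => complex, of which only
the values on the unit circle matter. The circle is parametrised by cis t, t in [0, 2 pi];
arclength measure on S^1 is the image of Lebesgue measure on [0, 2 pi] under cis.\<close>

definition H12_sq :: "(complex \<Rightarrow> complex) \<Rightarrow> ennreal" where
  "H12_sq h =
     (\<integral>\<^sup>+ x. (\<integral>\<^sup>+ y. ennreal ((cmod (h (cis x) - h (cis y)))\<^sup>2 / (cmod (cis x - cis y))\<^sup>2)
                  * indicator {0..2*pi} y \<partial>lborel) * indicator {0..2*pi} x \<partial>lborel)"

definition L2_sq :: "(complex \<Rightarrow> complex) \<Rightarrow> ennreal" where
  "L2_sq h = (\<integral>\<^sup>+ x. ennreal ((cmod (h (cis x)))\<^sup>2) * indicator {0..2*pi} x \<partial>lborel)"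

definition in_H12 :: "(complex \<Rightarrow> complex) \<Rightarrow> bool" where
  "in_H12 h \<longleftrightarrow> (\<lambda>x. h (cis x)) \<in> borel_measurable lborel \<and> L2_sq h < \<infinity> \<and> H12_sq h < \<infinity>"

definition in_H12_S1 :: "(complex \<Rightarrow> complex) \<Rightarrow> bool" where
  "in_H12_S1 g \<longleftrightarrow> in_H12 g \<and> (AE x in lborel. x \<in> {0..2*pi} \<longrightarrow> cmod (g (cis x)) = 1)"

definition smooth_real :: "(real \<Rightarrow> complex) \<Rightarrow> bool" where
  "smooth_real F \<longleftrightarrow> (\<exists>D :: nat \<Rightarrow> real \<Rightarrow> complex. D 0 = F \<and>
      (\<forall>n t. (D n has_vector_derivative D (Suc n) t) (at t)))"

definition smooth_S1_map :: "(complex \<Rightarrow> complex) \<Rightarrow> bool" where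
  "smooth_S1_map u \<longleftrightarrow> smooth_real (\<lambda>t. u (cis t)) \<and> (\<forall>t. cmod (u (cis t)) = 1)"

definition smooth_degree :: "(complex \<Rightarrow> complex) \<Rightarrow> complex" where
  "smooth_degree u = winding_number (\<lambda>t. u (cis (2*pi*t))) 0"

text \<open>Degree of H^{1/2}(S^1;S^1) maps: the extension of the smooth degree, continuous in H^{1/2}
(smooth S^1-valued maps are dense, so g has degree d iff it is the H^{1/2}-limit of smooth
maps of degree d).\<close>
definition H12_degree :: "(complex \<Rightarrow> complex) \<Rightarrow> int \<Rightarrow> bool" where
  "H12_degree g d \<longleftrightarrow> (\<exists>v :: nat \<Rightarrow> complex \<Rightarrow> complex.
      (\<forall>n. smooth_S1_map (v n) \<and> smooth_degree (v n) = of_int d) \<and>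
      (\<lambda>n. L2_sq (\<lambda>z. v n z - g z)) \<longlonglongrightarrow> 0 \<and>
      (\<lambda>n. H12_sq (\<lambda>z. v n z - g z)) \<longlonglongrightarrow> 0)"

definition E_deg :: "int \<Rightarrow> (complex \<Rightarrow> complex) set" where
  "E_deg d = {g. in_H12_S1 g \<and> H12_degree g d}"

end

theory Submission
  imports Defs
begin

text \<open>
  For a smooth \<open>2\<pi>\<close>-periodic function \<open>F\<close> with Fourier coefficients \<open>c\<^sub>n\<close>, integrating first in
  \<open>x\<close> the squared difference quotients of the translates \<open>F (x + t) - F x\<close> and applying Parseval
  gives \<open>|F|\<^sup>2\<^sub>H\<^sub>1\<^sub>/\<^sub>2 = 4\<pi>\<^sup>2 \<Sum>\<^sub>k k (|c\<^sub>k|\<^sup>2 + |c\<^sub>-\<^sub>k|\<^sup>2)\<close>, since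
  \<open>\<integral>\<^sub>0\<^sup>2\<^sup>\<pi> |e\<^sup>i\<^sup>k\<^sup>t - 1|\<^sup>2 / |e\<^sup>i\<^sup>t - 1|\<^sup>2 dt = 2\<pi>k\<close>. This is at least \<open>4\<pi>\<^sup>2 \<Sum>\<^sub>n n |c\<^sub>n|\<^sup>2\<close>.
  For a smooth circle-valued \<open>v\<close> of degree \<open>d\<close> with coefficients \<open>a\<^sub>n\<close>, the winding number
  integral gives \<open>\<Sum>\<^sub>n n |a\<^sub>n|\<^sup>2 = d\<close>; the coefficients of \<open>z\<^sup>m - v\<close> are \<open>\<delta>\<^sub>m\<^sub>n - a\<^sub>n\<close>, so
  \<open>\<Sum>\<^sub>n n |c\<^sub>n|\<^sup>2 = d + m (1 - 2 Re a\<^sub>m) \<ge> d - m\<close> because \<open>|a\<^sub>m| \<le> 1\<close>.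
  A general \<open>g\<close> of degree \<open>d\<close> is an \<open>H\<^sup>1\<^sup>/\<^sup>2\<close>-limit of such \<open>v\<close>, and the bound passes to the limit
  by \<open>|x + y|\<^sup>2 \<le> (1 + \<epsilon>) |x|\<^sup>2 + (1 + 1/\<epsilon>) |y|\<^sup>2\<close>.
\<close>

definition fourier_exp :: "int \<Rightarrow> real \<Rightarrow> complex" where
  "fourier_exp n t = cis (of_int n * t)"

lemma fourier_exp_mult: "fourier_exp m t * fourier_exp n t = fourier_exp (m + n) t"
  by (simp add: fourier_exp_def cis_mult algebra_simps)

lemma fourier_exp_add: "fourier_exp n (s + t) = fourier_exp n s * fourier_exp n t"
  by (simp add: fourier_exp_def cis_mult algebra_simps)

lemma cnj_fourier_exp: "cnj (fourier_exp n t) = fourier_exp (-n) t"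
  by (simp add: fourier_exp_def cis_cnj)

lemma norm_fourier_exp [simp]: "norm (fourier_exp n t) = 1"
  by (simp add: fourier_exp_def)

lemma fourier_exp_0_left [simp]: "fourier_exp 0 t = 1"
  and fourier_exp_0_right [simp]: "fourier_exp n 0 = 1"
  by (simp_all add: fourier_exp_def)

lemma fourier_exp_of_nat: "fourier_exp (int k) t = cis t ^ k"
  by (simp add: fourier_exp_def Complex.DeMoivre)

lemma fourier_exp_2pi [simp]: "fourier_exp n (2*pi) = 1"
  using cis_multiple_2pi[of "of_int n"] by (simp add: fourier_exp_def mult.commute)

lemma fourier_exp_periodic: "fourier_exp n (t + 2*pi) = fourier_exp n t"
  by (simp add: fourier_exp_add)

lemma has_vector_derivative_fourier_exp:
  "(fourier_exp n has_vector_derivative (\<i> * of_int n * fourier_exp n t)) (at t within A)"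
  unfolding fourier_exp_def has_vector_derivative_def
  by (rule derivative_eq_intros refl | simp add: algebra_simps fun_eq_iff scaleR_conv_of_real)+

lemma continuous_on_fourier_exp [continuous_intros]: "continuous_on A (fourier_exp n)"
  unfolding fourier_exp_def by (intro continuous_intros)

lemma borel_measurable_cis [measurable]: "cis \<in> borel_measurable borel"
  by (intro borel_measurable_continuous_onI continuous_intros)

lemma integral_fourier_exp: "integral {0..2*pi} (fourier_exp n) = (if n = 0 then 2*pi else 0)"
proof (cases "n = 0")
  case True
  then show ?thesis by (simp add: integral_const_real scaleR_conv_of_real cong: integral_cong)
next
  case False
  have "((\<lambda>t. fourier_exp n t / (\<i> * of_int n)) has_vector_derivative fourier_exp n t)
          (at t within {0..2*pi})" for t
    using has_vector_derivative_divide[OF has_vector_derivative_fourier_exp[of n t "{0..2*pi}"],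
        of "\<i> * of_int n"] False
    by simp
  then have "(fourier_exp n has_integral
      (fourier_exp n (2*pi) / (\<i> * of_int n) - fourier_exp n 0 / (\<i> * of_int n))) {0..2*pi}"
    by (intro fundamental_theorem_of_calculus) auto
  with False show ?thesis by (simp add: integral_unique)
qed

lemma integral_mult_cnj_self:
  assumes "continuous_on {0..2*pi} P"
  shows "integral {0..2*pi} (\<lambda>t. P t * cnj (P t)) = of_real (integral {0..2*pi} (\<lambda>t. (cmod (P t))\<^sup>2))"
proof -
  have "((\<lambda>t. complex_of_real ((cmod (P t))\<^sup>2)) has_integral
          of_real (integral {0..2*pi} (\<lambda>t. (cmod (P t))\<^sup>2))) {0..2*pi}"
    by (intro has_integral_of_real integrable_integral integrable_continuous_real
        continuous_intros assms)
  then show ?thesis by (simp only: complex_norm_square integral_unique)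
qed

definition fourier_coeff :: "(real \<Rightarrow> complex) \<Rightarrow> int \<Rightarrow> complex" where
  "fourier_coeff U n = integral {0..2*pi} (\<lambda>t. U t * fourier_exp (-n) t) / (2*pi)"

lemma integral_mult_cnj_trig_poly:
  assumes "finite A" "continuous_on {0..2*pi} U"
  shows "integral {0..2*pi} (\<lambda>t. U t * cnj (\<Sum>n\<in>A. a n * fourier_exp n t))
         = 2*pi * (\<Sum>n\<in>A. cnj (a n) * fourier_coeff U n)"
proof -
  have "(\<lambda>t. U t * cnj (\<Sum>n\<in>A. a n * fourier_exp n t))
      = (\<lambda>t. \<Sum>n\<in>A. cnj (a n) * (U t * fourier_exp (-n) t))"
    by (auto simp: fun_eq_iff sum_distrib_left cnj_fourier_exp algebra_simps)
  then have "integral {0..2*pi} (\<lambda>t. U t * cnj (\<Sum>n\<in>A. a n * fourier_exp n t))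
      = (\<Sum>n\<in>A. cnj (a n) * (2*pi * fourier_coeff U n))"
    using assms by (simp add: integral_sum integrable_continuous_real continuous_intros fourier_coeff_def)
  then show ?thesis by (simp add: sum_distrib_left algebra_simps)
qed

lemma fourier_coeff_trig_poly:
  assumes "finite A"
  shows "fourier_coeff (\<lambda>t. \<Sum>n\<in>A. a n * fourier_exp n t) m = (if m \<in> A then a m else 0)"
proof -
  have "(\<lambda>t. (\<Sum>n\<in>A. a n * fourier_exp n t) * fourier_exp (-m) t)
      = (\<lambda>t. \<Sum>n\<in>A. a n * fourier_exp (n - m) t)"
    by (auto simp: fun_eq_iff sum_distrib_right fourier_exp_mult mult.assoc)
  then have "integral {0..2*pi} (\<lambda>t. (\<Sum>n\<in>A. a n * fourier_exp n t) * fourier_exp (-m) t)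
      = (\<Sum>n\<in>A. a n * (if n = m then 2*pi else 0))"
    using assms by (simp add: integral_sum integrable_continuous_real continuous_intros
        integral_fourier_exp)
  also have "\<dots> = (\<Sum>n\<in>A. if n = m then a m * 2 * pi else 0)"
    by (rule sum.cong) auto
  finally show ?thesis using assms by (simp add: fourier_coeff_def sum.delta')
qed

lemma fourier_coeff_fourier_exp: "fourier_coeff (fourier_exp m) n = (if n = m then 1 else 0)"
  using fourier_coeff_trig_poly[of "{m}" "\<lambda>_. 1" n] by simp

lemma integral_norm_sq_trig_poly:
  assumes "finite A"
  shows "integral {0..2*pi} (\<lambda>t. (cmod (\<Sum>n\<in>A. a n * fourier_exp n t))\<^sup>2)
       = 2*pi * (\<Sum>n\<in>A. (cmod (a n))\<^sup>2)"
proof -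
  let ?P = "\<lambda>t. \<Sum>n\<in>A. a n * fourier_exp n t"
  have "complex_of_real (integral {0..2*pi} (\<lambda>t. (cmod (?P t))\<^sup>2))
      = integral {0..2*pi} (\<lambda>t. ?P t * cnj (?P t))"
    by (rule integral_mult_cnj_self[symmetric]) (intro continuous_intros)
  also have "\<dots> = 2*pi * (\<Sum>n\<in>A. cnj (a n) * a n)"
    using integral_mult_cnj_trig_poly[OF assms, of ?P a] assms
    by (simp add: continuous_intros fourier_coeff_trig_poly cong: sum.cong)
  also have "\<dots> = of_real (2*pi * (\<Sum>n\<in>A. (cmod (a n))\<^sup>2))"
    unfolding of_real_mult of_real_sum
    by (simp add: complex_norm_square mult.commute del: of_real_power)
  finally show ?thesis by (simp only: of_real_eq_iff)
qed

lemma fourier_coeff_diff: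
  assumes "continuous_on {0..2*pi} U" "continuous_on {0..2*pi} V"
  shows "fourier_coeff (\<lambda>t. U t - V t) m = fourier_coeff U m - fourier_coeff V m"
  using assms
  by (simp add: fourier_coeff_def left_diff_distrib integral_diff integrable_continuous_real
      continuous_intros diff_divide_distrib)

lemma norm_fourier_coeff_le:
  assumes "continuous_on {0..2*pi} U" "\<And>t. t \<in> {0..2*pi} \<Longrightarrow> norm (U t) \<le> B"
  shows "norm (fourier_coeff U m) \<le> B"
proof -
  have "norm (integral {0..2*pi} (\<lambda>t. U t * fourier_exp (-m) t)) \<le> B * (2*pi - 0)"
    by (rule integral_bound) (auto intro!: continuous_intros assms simp: norm_mult)
  then show ?thesis by (simp add: fourier_coeff_def norm_divide field_simps)
qed

lemma sum_int_symmetric: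
  "(\<Sum>n\<in>{-int N..int N}. b n) = (\<Sum>k<Suc N. if k = 0 then b 0 else b (int k) + b (- int k))"
proof (induction N)
  case (Suc N)
  have "{- int (Suc N)..int (Suc N)} = insert (int (Suc N)) (insert (- int (Suc N)) {-int N..int N})"
    by auto
  then show ?case by (simp add: Suc algebra_simps)
qed simp

definition trig_sum :: "(int \<Rightarrow> complex) \<Rightarrow> nat \<Rightarrow> real \<Rightarrow> complex" where
  "trig_sum a N t = (\<Sum>n\<in>{-int N..int N}. a n * fourier_exp n t)"

text \<open>Grouping the terms \<open>\<plusminus>k\<close> turns the symmetric partial sums into ordinary partial sums.\<close>

definition trig_pair :: "(int \<Rightarrow> complex) \<Rightarrow> nat \<Rightarrow> real \<Rightarrow> complex" where
  "trig_pair a k t = (if k = 0 then a 0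
     else a (int k) * fourier_exp (int k) t + a (- int k) * fourier_exp (- int k) t)"

definition trig_series :: "(int \<Rightarrow> complex) \<Rightarrow> real \<Rightarrow> complex" where
  "trig_series a t = (\<Sum>k. trig_pair a k t)"

definition coeffs_abs_summable :: "(int \<Rightarrow> complex) \<Rightarrow> bool" where
  "coeffs_abs_summable a \<longleftrightarrow> summable (\<lambda>k::nat. cmod (a (int k)) + cmod (a (- int k)))"

lemma trig_sum_eq_sum_trig_pair: "trig_sum a N t = (\<Sum>k<Suc N. trig_pair a k t)"
  unfolding trig_sum_def trig_pair_def sum_int_symmetric by (auto intro!: sum.cong)

lemma norm_trig_pair_le: "norm (trig_pair a k t) \<le> cmod (a (int k)) + cmod (a (- int k))"
  by (auto simp: trig_pair_def norm_mult intro!: order.trans[OF norm_triangle_ineq])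

lemma trig_pair_periodic: "trig_pair a k (t + 2*pi) = trig_pair a k t"
  by (simp add: trig_pair_def fourier_exp_periodic)

lemma trig_series_periodic: "trig_series a (t + 2*pi) = trig_series a t"
  by (simp add: trig_series_def trig_pair_periodic)

lemma summable_trig_pair: "coeffs_abs_summable a \<Longrightarrow> summable (\<lambda>k. trig_pair a k t)"
  unfolding coeffs_abs_summable_def
  by (rule summable_norm_cancel,
      rule summable_comparison_test[of _ "\<lambda>k. cmod (a (int k)) + cmod (a (- int k))"])
     (auto intro: norm_trig_pair_le)

lemma uniform_limit_trig_sum:
  assumes "coeffs_abs_summable a"
  shows "uniform_limit UNIV (trig_sum a) (trig_series a) sequentially"
proof -
  have "uniform_limit UNIV (\<lambda>n t. \<Sum>k<n. trig_pair a k t) (\<lambda>t. \<Sum>k. trig_pair a k t) sequentially"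
    by (rule Weierstrass_m_test[OF norm_trig_pair_le])
       (use assms in \<open>simp add: coeffs_abs_summable_def\<close>)
  then have "uniform_limit UNIV (\<lambda>n t. \<Sum>k<Suc n. trig_pair a k t) (\<lambda>t. \<Sum>k. trig_pair a k t)
      sequentially"
    by (subst filterlim_sequentially_Suc)
  then show ?thesis
    by (simp add: trig_sum_eq_sum_trig_pair[abs_def] trig_series_def[abs_def])
qed

lemma continuous_on_trig_series: "coeffs_abs_summable a \<Longrightarrow> continuous_on A (trig_series a)"
  by (rule uniform_limit_theorem[OF _ uniform_limit_on_subset[OF uniform_limit_trig_sum]])
     (auto intro!: continuous_intros always_eventually simp: trig_sum_def)

lemma tendsto_integral_mult_uniform_limit:
  fixes P :: "nat \<Rightarrow> real \<Rightarrow> complex"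
  assumes lim: "uniform_limit {0..2*pi} P G sequentially"
    and "\<And>N. continuous_on {0..2*pi} (P N)" "continuous_on {0..2*pi} G" "continuous_on {0..2*pi} U"
  shows "(\<lambda>N. integral {0..2*pi} (\<lambda>t. U t * P N t)) \<longlonglongrightarrow> integral {0..2*pi} (\<lambda>t. U t * G t)"
proof -
  have "bounded (U ` {0..2*pi})" "bounded (G ` {0..2*pi})"
    using assms(3,4) by (auto intro!: compact_imp_bounded compact_continuous_image)
  then have "uniform_limit {0..2*pi} (\<lambda>N t. U t * P N t) (\<lambda>t. U t * G t) sequentially"
    by (intro uniform_lim_mult uniform_limit_const lim assms)
  then obtain I J where
    "\<And>N. ((\<lambda>t. U t * P N t) has_integral I N) {0..2*pi}"
    "((\<lambda>t. U t * G t) has_integral J) {0..2*pi}" "I \<longlonglongrightarrow> J"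
    by (rule uniform_limit_integral[where F=sequentially]) (auto intro!: continuous_intros assms)
  moreover from this(1) have "(\<lambda>N. integral {0..2*pi} (\<lambda>t. U t * P N t)) = I"
    by (auto intro: integral_unique)
  ultimately show ?thesis by (simp add: integral_unique)
qed

lemma fourier_coeff_trig_series:
  assumes "coeffs_abs_summable a"
  shows "fourier_coeff (trig_series a) m = a m"
proof -
  have "(\<lambda>N. integral {0..2*pi} (\<lambda>t. fourier_exp (-m) t * trig_sum a N t))
        \<longlonglongrightarrow> integral {0..2*pi} (\<lambda>t. fourier_exp (-m) t * trig_series a t)"
    by (rule tendsto_integral_mult_uniform_limit
          [OF uniform_limit_on_subset[OF uniform_limit_trig_sum[OF assms]]])
       (auto intro!: continuous_intros continuous_on_trig_series assms simp: trig_sum_def)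
  moreover have "\<forall>\<^sub>F N in sequentially.
      integral {0..2*pi} (\<lambda>t. fourier_exp (-m) t * trig_sum a N t) = 2*pi * a m"
  proof (rule eventually_sequentiallyI[of "nat \<bar>m\<bar>"])
    fix N assume "nat \<bar>m\<bar> \<le> N"
    then have "fourier_coeff (trig_sum a N) m = a m"
      unfolding trig_sum_def[abs_def] by (subst fourier_coeff_trig_poly) auto
    then show "integral {0..2*pi} (\<lambda>t. fourier_exp (-m) t * trig_sum a N t) = 2*pi * a m"
      by (simp add: fourier_coeff_def mult.commute field_simps)
  qed
  then have "(\<lambda>N. integral {0..2*pi} (\<lambda>t. fourier_exp (-m) t * trig_sum a N t)) \<longlonglongrightarrow> 2*pi * a m"
    by (rule tendsto_eventually)
  ultimately have "integral {0..2*pi} (\<lambda>t. fourier_exp (-m) t * trig_series a t) = 2*pi * a m"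
    by (rule LIMSEQ_unique)
  then show ?thesis by (simp add: fourier_coeff_def mult.commute)
qed

lemma tendsto_integral_mult_cnj_trig_sum:
  assumes "coeffs_abs_summable a" "continuous_on {0..2*pi} U"
  shows "(\<lambda>N. 2*pi * (\<Sum>n\<in>{-int N..int N}. cnj (a n) * fourier_coeff U n))
           \<longlonglongrightarrow> integral {0..2*pi} (\<lambda>t. U t * cnj (trig_series a t))"
proof -
  have "uniform_limit {0..2*pi} (\<lambda>N t. cnj (trig_sum a N t)) (\<lambda>t. cnj (trig_series a t)) sequentially"
    by (rule bounded_linear.uniform_limit[OF bounded_linear_cnj
          uniform_limit_on_subset[OF uniform_limit_trig_sum[OF assms(1)]]]) simp
  then have "(\<lambda>N. integral {0..2*pi} (\<lambda>t. U t * cnj (trig_sum a N t)))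
           \<longlonglongrightarrow> integral {0..2*pi} (\<lambda>t. U t * cnj (trig_series a t))"
    by (rule tendsto_integral_mult_uniform_limit)
       (auto intro!: continuous_intros continuous_on_trig_series assms simp: trig_sum_def)
  moreover have "integral {0..2*pi} (\<lambda>t. U t * cnj (trig_sum a N t)) =
      2*pi * (\<Sum>n\<in>{-int N..int N}. cnj (a n) * fourier_coeff U n)" for N
    unfolding trig_sum_def by (rule integral_mult_cnj_trig_poly) (auto simp: assms)
  ultimately show ?thesis by simp
qed

section \<open>Uniqueness of Fourier coefficients\<close>

lemma Arg2pi_cis: "0 \<le> t \<Longrightarrow> t < 2*pi \<Longrightarrow> Arg2pi (cis t) = t"
  by (simp add: cis_conv_exp Arg2pi_exp)

text \<open>\<open>Arg2pi\<close> jumps at \<open>1\<close>, but the loop condition makes \<open>H \<circ> Arg2pi\<close> continuous on the circle.\<close>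

lemma continuous_on_sphere_comp_Arg2pi:
  assumes cont: "continuous_on {0..2*pi} H" and loop: "H 0 = H (2*pi)"
  shows "continuous_on (sphere 0 1) (H \<circ> Arg2pi)"
proof -
  define \<gamma> where "\<gamma> s = H (2*pi * s)" for s
  have "path \<gamma>"
    unfolding path_def \<gamma>_def
    by (rule continuous_on_compose2[OF cont]) (auto intro!: continuous_intros)
  moreover have "pathfinish \<gamma> = pathstart \<gamma>"
    using loop by (simp add: pathfinish_def pathstart_def \<gamma>_def)
  ultimately have "homotopic_loops (path_image \<gamma>) \<gamma> \<gamma>"
    by (simp add: homotopic_loops_refl)
  from homotopic_with_imp_continuous[OF homotopic_loops_imp_homotopic_circlemaps[OF this]]
  show ?thesis by (simp add: \<gamma>_def o_def)
qed

lemma comp_Arg2pi_cis: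
  assumes "H 0 = H (2*pi)" "t \<in> {0..2*pi}"
  shows "(H \<circ> Arg2pi) (cis t) = H t"
proof (cases "t = 2*pi")
  case True
  then show ?thesis using assms(1) Arg2pi_cis[of 0] by simp
qed (use assms(2) Arg2pi_cis in auto)

definition trig_poly_on_circle :: "(complex \<Rightarrow> complex) \<Rightarrow> bool" where
  "trig_poly_on_circle f \<longleftrightarrow>
     (\<exists>A b. finite A \<and> (\<forall>t. f (cis t) = (\<Sum>n\<in>A. b n * fourier_exp n t)))"

lemma trig_poly_on_circle_const: "trig_poly_on_circle (\<lambda>z. c)"
  unfolding trig_poly_on_circle_def by (rule exI[of _ "{0}"], rule exI[of _ "\<lambda>_. c"]) simp

lemma sum_fourier_exp_extend:
  assumes "finite C" "A \<subseteq> C"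
  shows "(\<Sum>n\<in>A. b n * fourier_exp n t) = (\<Sum>n\<in>C. (if n \<in> A then b n else 0) * fourier_exp n t)"
proof -
  have "(\<Sum>n\<in>C. (if n \<in> A then b n else 0) * fourier_exp n t)
      = (\<Sum>n\<in>C. if n \<in> A then b n * fourier_exp n t else 0)"
    by (rule sum.cong) auto
  also have "\<dots> = (\<Sum>n\<in>A. b n * fourier_exp n t)"
    using sum.inter_restrict[OF assms(1), of "\<lambda>n. b n * fourier_exp n t" A] Int_absorb1[OF assms(2)]
    by simp
  finally show ?thesis ..
qed

lemma trig_poly_on_circle_add:
  assumes "trig_poly_on_circle f" "trig_poly_on_circle g"
  shows "trig_poly_on_circle (\<lambda>z. f z + g z)"
proof -
  from assms obtain A b B c where A: "finite A" "\<And>t. f (cis t) = (\<Sum>n\<in>A. b n * fourier_exp n t)"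
    and B: "finite B" "\<And>t. g (cis t) = (\<Sum>n\<in>B. c n * fourier_exp n t)"
    unfolding trig_poly_on_circle_def by blast
  have "f (cis t) + g (cis t) = (\<Sum>n\<in>A \<union> B.
          ((if n \<in> A then b n else 0) + (if n \<in> B then c n else 0)) * fourier_exp n t)" for t
    unfolding A(2) B(2) distrib_right sum.distrib
    using A(1) B(1) sum_fourier_exp_extend[of "A \<union> B" A b t] sum_fourier_exp_extend[of "A \<union> B" B c t]
    by simp
  then show ?thesis
    unfolding trig_poly_on_circle_def using A(1) B(1) by (intro exI[of _ "A \<union> B"]) auto
qed

lemma trig_poly_on_circle_mult:
  assumes "trig_poly_on_circle f" "trig_poly_on_circle g"
  shows "trig_poly_on_circle (\<lambda>z. f z * g z)"
proof -
  from assms obtain A b B c where A: "finite A" "\<And>t. f (cis t) = (\<Sum>n\<in>A. b n * fourier_exp n t)"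
    and B: "finite B" "\<And>t. g (cis t) = (\<Sum>n\<in>B. c n * fourier_exp n t)"
    unfolding trig_poly_on_circle_def by blast
  let ?s = "\<lambda>p::int\<times>int. fst p + snd p"
  define d where "d k = (\<Sum>p\<in>{p \<in> A \<times> B. ?s p = k}. b (fst p) * c (snd p))" for k
  have "f (cis t) * g (cis t) = (\<Sum>k\<in>?s ` (A \<times> B). d k * fourier_exp k t)" for t
  proof -
    have "f (cis t) * g (cis t) = (\<Sum>p\<in>A \<times> B. b (fst p) * c (snd p) * fourier_exp (?s p) t)"
      unfolding A(2) B(2) sum_product
      by (simp add: sum.cartesian_product case_prod_beta fourier_exp_mult[symmetric] algebra_simps)
    also have "\<dots> = (\<Sum>k\<in>?s ` (A \<times> B). \<Sum>p\<in>{p \<in> A \<times> B. ?s p = k}.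
                        b (fst p) * c (snd p) * fourier_exp (?s p) t)"
      by (rule sum.group[symmetric]) (use A(1) B(1) in auto)
    also have "\<dots> = (\<Sum>k\<in>?s ` (A \<times> B). d k * fourier_exp k t)"
      unfolding d_def sum_distrib_right by (intro sum.cong refl) auto
    finally show ?thesis .
  qed
  then show ?thesis
    unfolding trig_poly_on_circle_def using A(1) B(1) by (intro exI[of _ "?s ` (A \<times> B)"]) auto
qed

lemma trig_poly_on_circle_of_real_linear:
  assumes "bounded_linear (f :: complex \<Rightarrow> real)"
  shows "trig_poly_on_circle (\<lambda>z. of_real (f z))"
proof -
  interpret linear f using assms by (rule bounded_linear.linear)
  have f: "f z = Re z * f 1 + Im z * f \<i>" for z
  proof -
    have "z = Re z *\<^sub>R 1 + Im z *\<^sub>R \<i>" by (simp add: complex_eq_iff)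
    then have "f z = f (Re z *\<^sub>R 1 + Im z *\<^sub>R \<i>)" by simp
    also have "\<dots> = Re z * f 1 + Im z * f \<i>" by (simp only: add scale real_scaleR_def)
    finally show ?thesis .
  qed
  define b where "b n = (if n = 1 then (of_real (f 1) - \<i> * of_real (f \<i>)) / 2
                         else (of_real (f 1) + \<i> * of_real (f \<i>)) / 2)" for n :: int
  have "of_real (f (cis t)) = (\<Sum>n\<in>{1, -1}. b n * fourier_exp n t)" for t
  proof -
    have e: "fourier_exp 1 t = cos t + \<i> * sin t" "fourier_exp (-1) t = cos t - \<i> * sin t"
      by (simp_all add: fourier_exp_def cis.ctr complex_eq_iff)
    have "(\<Sum>n\<in>{1, -1}. b n * fourier_exp n t) = b 1 * fourier_exp 1 t + b (-1) * fourier_exp (-1) t"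
      by simp
    also have "\<dots> = of_real (cos t * f 1 + sin t * f \<i>)"
      unfolding e b_def by (simp add: complex_eq_iff field_simps)
    finally have "(\<Sum>n\<in>{1, -1}. b n * fourier_exp n t) = of_real (cos t * f 1 + sin t * f \<i>)" .
    then show ?thesis by (simp add: f[of "cis t"])
  qed
  then show ?thesis
    unfolding trig_poly_on_circle_def by (intro exI[of _ "{1, -1}"] exI[of _ b]) auto
qed

lemma trig_poly_on_circle_of_real_polynomial:
  "real_polynomial_function (f :: complex \<Rightarrow> real) \<Longrightarrow> trig_poly_on_circle (\<lambda>z. of_real (f z))"
proof (induction rule: real_polynomial_function.induct)
  case (linear f) then show ?case by (rule trig_poly_on_circle_of_real_linear)
next
  case (const c) then show ?case using trig_poly_on_circle_const[of "of_real c"] by simp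
next
  case (add f g) then show ?case using trig_poly_on_circle_add by fastforce
next
  case (mult f g) then show ?case using trig_poly_on_circle_mult by fastforce
qed

lemma polynomial_function_imp_trig_poly_on_circle:
  assumes "polynomial_function (g :: complex \<Rightarrow> complex)"
  shows "trig_poly_on_circle g"
proof -
  have "real_polynomial_function (Re \<circ> g)" "real_polynomial_function (Im \<circ> g)"
    using assms bounded_linear_Re bounded_linear_Im unfolding polynomial_function_def by auto
  then have "trig_poly_on_circle (\<lambda>z. of_real (Re (g z)) + \<i> * of_real (Im (g z)))"
    by (intro trig_poly_on_circle_add trig_poly_on_circle_mult trig_poly_on_circle_const)
       (auto dest: trig_poly_on_circle_of_real_polynomial simp: o_def)
  then show ?thesis by (simp add: complex_eq[symmetric])
qed

lemma trig_poly_approximation: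
  assumes "continuous_on {0..2*pi} H" "H 0 = H (2*pi)" "e > 0"
  obtains A b where "finite A"
    "\<And>t. t \<in> {0..2*pi} \<Longrightarrow> norm (H t - (\<Sum>n\<in>A. b n * fourier_exp n t)) < e"
proof -
  obtain g where g: "polynomial_function g" "\<And>z. z \<in> sphere 0 1 \<Longrightarrow> norm ((H \<circ> Arg2pi) z - g z) < e"
    using Stone_Weierstrass_polynomial_function[OF compact_sphere
        continuous_on_sphere_comp_Arg2pi[OF assms(1,2)] assms(3)] by blast
  obtain A b where A: "finite A" "\<And>t. g (cis t) = (\<Sum>n\<in>A. b n * fourier_exp n t)"
    using polynomial_function_imp_trig_poly_on_circle[OF g(1)] unfolding trig_poly_on_circle_def by blast
  show ?thesis
  proof (rule that[OF A(1)])
    fix t assume t: "t \<in> {0..2*pi}"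
    have "norm ((H \<circ> Arg2pi) (cis t) - g (cis t)) < e" by (rule g(2)) simp
    then show "norm (H t - (\<Sum>n\<in>A. b n * fourier_exp n t)) < e"
      by (simp only: comp_Arg2pi_cis[OF assms(2) t] A(2))
  qed
qed

lemma integral_norm_sq_eq_0_if_fourier_coeff_eq_0:
  assumes cont: "continuous_on {0..2*pi} H" and loop: "H 0 = H (2*pi)"
    and coeff: "\<And>n. fourier_coeff H n = 0"
  shows "integral {0..2*pi} (\<lambda>t. (cmod (H t))\<^sup>2) = 0"
proof -
  obtain M where M: "\<And>t. t \<in> {0..2*pi} \<Longrightarrow> norm (H t) \<le> M"
    using compact_imp_bounded[OF compact_continuous_image[OF cont]] unfolding bounded_iff
    by (meson compact_Icc imageI)
  have "norm (H 0) \<le> M" by (rule M) simp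
  then have M0: "M \<ge> 0" using norm_ge_zero[of "H 0"] by linarith
  define I where "I = integral {0..2*pi} (\<lambda>t. H t * cnj (H t))"
  have "norm I \<le> e" if "e > 0" for e
  proof -
    define \<delta> where "\<delta> = e / (2*pi * (M + 1))"
    have \<delta>: "\<delta> > 0" using \<open>e > 0\<close> M0 by (simp add: \<delta>_def)
    obtain A b where A: "finite A"
      and approx: "\<And>t. t \<in> {0..2*pi} \<Longrightarrow> norm (H t - (\<Sum>n\<in>A. b n * fourier_exp n t)) < \<delta>"
      using trig_poly_approximation[OF cont loop \<delta>] by blast
    let ?P = "\<lambda>t. \<Sum>n\<in>A. b n * fourier_exp n t"
    have "integral {0..2*pi} (\<lambda>t. H t * cnj (?P t)) = 0"
      unfolding integral_mult_cnj_trig_poly[OF A cont] by (simp add: coeff)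
    then have "I = integral {0..2*pi} (\<lambda>t. H t * cnj (H t - ?P t))"
      unfolding I_def complex_cnj_diff right_diff_distrib
      by (subst integral_diff) (auto intro!: integrable_continuous_real continuous_intros cont)
    also have "norm \<dots> \<le> M * \<delta> * (2*pi - 0)"
    proof (rule integral_bound)
      fix t assume t: "t \<in> {0..2*pi}"
      then show "norm (H t * cnj (H t - ?P t)) \<le> M * \<delta>"
        unfolding norm_mult complex_mod_cnj
        using approx[OF t] M0 by (intro mult_mono M) auto
    qed (auto intro!: continuous_intros cont)
    also have "\<dots> = e * (M / (M + 1))"
      using M0 by (simp add: \<delta>_def field_simps add_nonneg_eq_0_iff)
    also have "\<dots> \<le> e * 1"
      using \<open>e > 0\<close> M0 by (intro mult_left_mono) auto
    finally show ?thesis by simp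
  qed
  then have "I = 0" using field_le_epsilon[of "norm I" 0] by simp
  then show ?thesis using integral_mult_cnj_self[OF cont] by (simp add: I_def)
qed

lemma fourier_coeff_eq_0_imp_eq_0:
  assumes cont: "continuous_on {0..2*pi} H" and loop: "H 0 = H (2*pi)"
    and coeff: "\<And>n. fourier_coeff H n = 0" and t: "t \<in> {0..2*pi}"
  shows "H t = 0"
proof -
  have cont_sq: "continuous_on {0..2*pi} (\<lambda>t. (cmod (H t))\<^sup>2)"
    by (intro continuous_intros cont)
  have "((\<lambda>t. (cmod (H t))\<^sup>2) has_integral 0) {0..2*pi}"
    using integral_norm_sq_eq_0_if_fourier_coeff_eq_0[OF assms(1-3)]
      integrable_integral[OF integrable_continuous_real[OF cont_sq]] by simp
  then have "(cmod (H t))\<^sup>2 = 0"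
    by (intro has_integral_0_cbox_imp_0[of 0 "2*pi" "\<lambda>s. (cmod (H s))\<^sup>2" t])
       (use t cont_sq pi_gt_zero in \<open>auto simp: not_le\<close>)
  then show ?thesis by simp
qed

lemma periodic_eq_if_eq_on_period:
  assumes "periodic_fun_simple f (2*pi)" "periodic_fun_simple g (2*pi)"
    and "\<And>t. t \<in> {0..2*pi} \<Longrightarrow> f t = g t"
  shows "f t = g t"
proof -
  define k where "k = \<lfloor>t / (2*pi)\<rfloor>"
  define s where "s = t - of_int k * (2*pi)"
  have "of_int k \<le> t / (2*pi)" "t / (2*pi) < of_int k + 1"
    unfolding k_def by linarith+
  then have "s \<in> {0..2*pi}"
    unfolding s_def by (simp add: field_simps)
  interpret f: periodic_fun_simple f "2*pi" by (rule assms(1))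
  interpret g: periodic_fun_simple g "2*pi" by (rule assms(2))
  have "f t = f (s + of_int k * (2*pi))" by (simp add: s_def)
  also have "\<dots> = g s"
    using f.plus_of_int assms(3)[OF \<open>s \<in> _\<close>] by simp
  also have "\<dots> = g (s + of_int k * (2*pi))"
    using g.plus_of_int by simp
  finally show ?thesis by (simp add: s_def)
qed

definition smooth_periodic :: "(nat \<Rightarrow> real \<Rightarrow> complex) \<Rightarrow> bool" where
  "smooth_periodic D \<longleftrightarrow>
     (\<forall>n t. (D n has_vector_derivative D (Suc n) t) (at t)) \<and> (\<forall>t. D 0 (t + 2*pi) = D 0 t)"

lemma smooth_periodic_has_vector_derivative:
  "smooth_periodic D \<Longrightarrow> (D n has_vector_derivative D (Suc n) t) (at t within A)"
  unfolding smooth_periodic_def by (auto intro: has_vector_derivative_at_within)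

lemma continuous_on_smooth_periodic: "smooth_periodic D \<Longrightarrow> continuous_on A (D n)"
  by (rule continuous_at_imp_continuous_on)
     (auto intro: has_vector_derivative_continuous smooth_periodic_has_vector_derivative)

lemma smooth_periodic_periodic:
  assumes "smooth_periodic D"
  shows "periodic_fun_simple (D n) (2*pi)"
proof (unfold_locales, induction n arbitrary: x)
  case 0
  then show ?case using assms by (simp add: smooth_periodic_def)
next
  case (Suc n)
  have "((\<lambda>s. s + 2*pi) has_vector_derivative 1) (at x)"
    by (auto intro!: derivative_eq_intros)
  from vector_diff_chain_at[OF this smooth_periodic_has_vector_derivative[OF assms]]
  have "((\<lambda>s. D n (s + 2*pi)) has_vector_derivative D (Suc n) (x + 2*pi)) (at x)"
    by (simp add: o_def)
  then have "(D n has_vector_derivative D (Suc n) (x + 2*pi)) (at x)"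
    by (simp add: Suc.IH)
  then show ?case
    by (rule vector_derivative_unique_at[OF _ smooth_periodic_has_vector_derivative[OF assms]])
qed

lemma fourier_coeff_derivative:
  assumes "smooth_periodic D"
  shows "fourier_coeff (D (Suc n)) m = \<i> * of_int m * fourier_coeff (D n) m"
proof -
  let ?e = "fourier_exp (-m)"
  have "((\<lambda>t. D (Suc n) t * ?e t + D n t * (\<i> * of_int (-m) * ?e t)) has_integral
        (D n (2*pi) * ?e (2*pi) - D n 0 * ?e 0)) {0..2*pi}"
  proof (rule fundamental_theorem_of_calculus)
    fix t
    show "((\<lambda>t. D n t * ?e t) has_vector_derivative
           D (Suc n) t * ?e t + D n t * (\<i> * of_int (-m) * ?e t)) (at t within {0..2*pi})"
      using has_vector_derivative_mult[OF smooth_periodic_has_vector_derivative[OF assms, of n t]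
          has_vector_derivative_fourier_exp[of "-m" t]] by (simp add: algebra_simps)
  qed simp
  moreover have "D n (2*pi) = D n 0"
    using periodic_fun_simple.plus_period[OF smooth_periodic_periodic[OF assms, of n], of 0] by simp
  ultimately have h: "((\<lambda>t. D (Suc n) t * ?e t + D n t * (\<i> * of_int (-m) * ?e t)) has_integral 0)
      {0..2*pi}"
    by simp
  have "(\<lambda>t. D (Suc n) t * ?e t) integrable_on {0..2*pi}"
    "(\<lambda>t. D n t * (\<i> * of_int (-m) * ?e t)) integrable_on {0..2*pi}"
    by (auto intro!: integrable_continuous_real continuous_intros continuous_on_smooth_periodic[OF assms])
  from integral_add[OF this] integral_unique[OF h]
  have "integral {0..2*pi} (\<lambda>t. D (Suc n) t * ?e t)
      + integral {0..2*pi} (\<lambda>t. (- \<i> * of_int m) * (D n t * ?e t)) = 0"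
    by (simp add: algebra_simps)
  then have "integral {0..2*pi} (\<lambda>t. D (Suc n) t * ?e t)
      = \<i> * of_int m * integral {0..2*pi} (\<lambda>t. D n t * ?e t)"
    by (simp only: integral_mult_right) (simp add: algebra_simps)
  then show ?thesis by (simp add: fourier_coeff_def)
qed

lemma fourier_coeff_higher_derivative:
  "smooth_periodic D \<Longrightarrow> fourier_coeff (D k) m = (\<i> * of_int m) ^ k * fourier_coeff (D 0) m"
  by (induction k) (simp_all add: fourier_coeff_derivative)

lemma smooth_periodic_coeffs_abs_summable:
  assumes "smooth_periodic D"
  shows "coeffs_abs_summable (fourier_coeff (D 0))"
proof -
  obtain B where B: "\<And>t. t \<in> {0..2*pi} \<Longrightarrow> norm (D 2 t) \<le> B"
    using compact_imp_bounded[OF compact_continuous_image[OF continuous_on_smooth_periodic[OF assms]]]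
    unfolding bounded_iff by (meson compact_Icc imageI)
  have decay: "cmod (fourier_coeff (D 0) m) \<le> B / (real_of_int \<bar>m\<bar>)\<^sup>2" if "m \<noteq> 0" for m
  proof -
    have "(real_of_int \<bar>m\<bar>)\<^sup>2 * cmod (fourier_coeff (D 0) m) = cmod (fourier_coeff (D 2) m)"
      by (simp add: fourier_coeff_higher_derivative[OF assms, of 2] norm_mult norm_power)
    also have "\<dots> \<le> B"
      by (rule norm_fourier_coeff_le[OF continuous_on_smooth_periodic[OF assms] B])
    finally show ?thesis
      using that by (simp add: pos_le_divide_eq mult.commute)
  qed
  show ?thesis
    unfolding coeffs_abs_summable_def
  proof (rule summable_comparison_test'[where N=1])
    show "summable (\<lambda>k::nat. 2 * B * inverse (real k ^ 2))"
      by (intro summable_mult inverse_power_summable) simp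
    fix k :: nat assume "k \<ge> 1"
    then have "cmod (fourier_coeff (D 0) (int k)) \<le> B / (real k)\<^sup>2"
      "cmod (fourier_coeff (D 0) (- int k)) \<le> B / (real k)\<^sup>2"
      using decay[of "int k"] decay[of "- int k"] by simp_all
    then show "norm (cmod (fourier_coeff (D 0) (int k)) + cmod (fourier_coeff (D 0) (- int k)))
        \<le> 2 * B * inverse (real k ^ 2)"
      by (simp add: divide_inverse)
  qed
qed

lemma trig_series_fourier_coeff:
  assumes "smooth_periodic D"
  shows "trig_series (fourier_coeff (D 0)) t = D 0 t"
proof -
  let ?a = "fourier_coeff (D 0)"
  let ?H = "\<lambda>s. trig_series ?a s - D 0 s"
  have abs_summable: "coeffs_abs_summable ?a"
    by (rule smooth_periodic_coeffs_abs_summable[OF assms])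
  have D_periodic: "periodic_fun_simple (D 0) (2*pi)"
    by (rule smooth_periodic_periodic[OF assms])
  have series_periodic: "periodic_fun_simple (trig_series ?a) (2*pi)"
    by unfold_locales (rule trig_series_periodic)
  have cont_series: "continuous_on {0..2*pi} (trig_series ?a)"
    by (rule continuous_on_trig_series[OF abs_summable])
  have cont_D: "continuous_on {0..2*pi} (D 0)"
    by (rule continuous_on_smooth_periodic[OF assms])
  have "?H 0 = ?H (2*pi)"
    using periodic_fun_simple.plus_period[OF D_periodic, of 0]
      periodic_fun_simple.plus_period[OF series_periodic, of 0] by simp
  moreover have "fourier_coeff ?H n = 0" for n
    using fourier_coeff_diff[OF cont_series cont_D, of n] fourier_coeff_trig_series[OF abs_summable, of n]
    by simp
  ultimately have "trig_series ?a s = D 0 s" if "s \<in> {0..2*pi}" for s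
    using fourier_coeff_eq_0_imp_eq_0[of ?H, OF _ _ _ that] cont_series cont_D
    by (auto intro: continuous_on_diff)
  then show ?thesis
    by (rule periodic_eq_if_eq_on_period[OF series_periodic D_periodic])
qed

section \<open>The degree as a Fourier sum\<close>

lemma one_divide_eq_cnj: "norm (w::complex) = 1 \<Longrightarrow> 1 / w = cnj w"
  using complex_div_cnj[of 1 w] by simp

lemma has_vector_derivative_smooth_periodic_loop:
  assumes "smooth_periodic D"
  shows "((\<lambda>s. D 0 (2*pi * s)) has_vector_derivative (2*pi) *\<^sub>R D 1 (2*pi * s)) (at s)"
proof -
  have "((\<lambda>s. 2*pi * s) has_vector_derivative 2*pi) (at s)"
    by (auto intro!: derivative_eq_intros)
  from vector_diff_chain_at[OF this smooth_periodic_has_vector_derivative[OF assms]]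
  show ?thesis by (simp add: o_def)
qed

lemma valid_path_smooth_periodic_loop:
  assumes D: "smooth_periodic D"
  shows "valid_path (\<lambda>s. D 0 (2*pi * s))"
  unfolding valid_path_def
proof (rule C1_differentiable_imp_piecewise)
  show "(\<lambda>s. D 0 (2*pi * s)) C1_differentiable_on {0..1}"
    unfolding C1_differentiable_on_def
  proof (intro exI conjI ballI)
    show "((\<lambda>s. D 0 (2*pi * s)) has_vector_derivative (2*pi) *\<^sub>R D 1 (2*pi * s)) (at s)" for s
      by (rule has_vector_derivative_smooth_periodic_loop[OF D])
    show "continuous_on {0..1} (\<lambda>s. (2*pi) *\<^sub>R D 1 (2*pi * s))"
      by (intro continuous_intros continuous_on_compose2[OF continuous_on_smooth_periodic[OF D]]) auto
  qed
qed

lemma winding_number_smooth_periodic: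
  assumes D: "smooth_periodic D" and unit: "\<And>t. norm (D 0 t) = 1"
  shows "winding_number (\<lambda>s. D 0 (2*pi * s)) 0 =
           integral {0..2*pi} (\<lambda>t. D 1 t * cnj (D 0 t)) / (2*pi*\<i>)"
proof -
  let ?g = "\<lambda>s. D 0 (2*pi * s)"
  define J where "J = integral {0..2*pi} (\<lambda>t. D 1 t * cnj (D 0 t))"
  have avoids_0: "0 \<notin> path_image ?g"
    using unit by (auto simp: path_image_def) (metis norm_zero zero_neq_one)
  have "((\<lambda>t. D 1 t * cnj (D 0 t)) has_integral J) {0..2*pi}"
    unfolding J_def
    by (intro integrable_integral integrable_continuous_real continuous_intros
        continuous_on_smooth_periodic[OF D])
  from has_integral_stretch_real[OF this, of "2*pi"]
  have "((\<lambda>s. D 1 (2*pi * s) * cnj (D 0 (2*pi * s))) has_integral (1 / (2*pi)) *\<^sub>R J) {0..1}"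
    using image_divide_atLeastAtMost[of "2*pi" 0 "2*pi"] by simp
  from has_integral_mult_right[OF this, of "of_real (2*pi)"]
  have "((\<lambda>s. of_real (2*pi) * (D 1 (2*pi * s) * cnj (D 0 (2*pi * s)))) has_integral J) {0..1}"
    by (simp add: scaleR_conv_of_real)
  then have "((\<lambda>w. 1 / (w - 0)) has_contour_integral J) ?g"
    unfolding has_contour_integral_def
  proof (rule has_integral_eq[rotated])
    fix s :: real assume "s \<in> {0..1}"
    then have "vector_derivative ?g (at s within {0..1}) = (2*pi) *\<^sub>R D 1 (2*pi * s)"
      by (intro vector_derivative_at_within_ivl[OF has_vector_derivative_smooth_periodic_loop[OF D]])
         auto
    then show "of_real (2*pi) * (D 1 (2*pi * s) * cnj (D 0 (2*pi * s))) =
        1 / (?g s - 0) * vector_derivative ?g (at s within {0..1})"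
      by (simp add: one_divide_eq_cnj[OF unit] scaleR_conv_of_real)
  qed
  then have "contour_integral ?g (\<lambda>w. 1 / (w - 0)) = J"
    by (rule contour_integral_unique)
  then show ?thesis
    using winding_number_valid_path[OF valid_path_smooth_periodic_loop[OF D] avoids_0]
    by (simp add: J_def)
qed

lemma tendsto_degree_fourier_sum:
  assumes D: "smooth_periodic D" and unit: "\<And>t. norm (D 0 t) = 1"
    and deg: "winding_number (\<lambda>s. D 0 (2*pi * s)) 0 = of_int d"
  shows "(\<lambda>N. \<Sum>n\<in>{-int N..int N}. real_of_int n * (cmod (fourier_coeff (D 0) n))\<^sup>2)
           \<longlonglongrightarrow> real_of_int d"
proof -
  let ?a = "fourier_coeff (D 0)"
  let ?S = "\<lambda>N. \<Sum>n\<in>{-int N..int N}. real_of_int n * (cmod (?a n))\<^sup>2"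
  have "(\<lambda>N. 2*pi * (\<Sum>n\<in>{-int N..int N}. cnj (?a n) * fourier_coeff (D 1) n))
           \<longlonglongrightarrow> integral {0..2*pi} (\<lambda>t. D 1 t * cnj (trig_series ?a t))"
    by (rule tendsto_integral_mult_cnj_trig_sum[OF smooth_periodic_coeffs_abs_summable[OF D]
          continuous_on_smooth_periodic[OF D]])
  moreover have "cnj (?a n) * fourier_coeff (D 1) n = \<i> * of_real (real_of_int n * (cmod (?a n))\<^sup>2)" for n
    using fourier_coeff_derivative[OF D, of 0 n] complex_norm_square[of "?a n"]
    by (simp add: algebra_simps)
  ultimately have "(\<lambda>N. (2*pi*\<i>) * of_real (?S N))
      \<longlonglongrightarrow> integral {0..2*pi} (\<lambda>t. D 1 t * cnj (D 0 t))"
    by (simp add: trig_series_fourier_coeff[OF D] sum_distrib_left algebra_simps)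
  then have "(\<lambda>N. of_real (?S N)) \<longlonglongrightarrow> integral {0..2*pi} (\<lambda>t. D 1 t * cnj (D 0 t)) / (2*pi*\<i>)"
    by (auto dest: tendsto_divide[OF _ tendsto_const, of _ _ _ "2*pi*\<i>"])
  moreover have "integral {0..2*pi} (\<lambda>t. D 1 t * cnj (D 0 t)) / (2*pi*\<i>) = of_real (real_of_int d)"
    using winding_number_smooth_periodic[OF D unit] deg by simp
  ultimately have "(\<lambda>N. complex_of_real (?S N)) \<longlonglongrightarrow> complex_of_real (real_of_int d)"
    by (simp only:)
  then show ?thesis by (simp only: tendsto_of_real_iff)
qed

lemma tendsto_parseval_trig_series:
  assumes a: "coeffs_abs_summable a"
  shows "(\<lambda>N. \<Sum>n\<in>{-int N..int N}. (cmod (a n))\<^sup>2)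
           \<longlonglongrightarrow> integral {0..2*pi} (\<lambda>t. (cmod (trig_series a t))\<^sup>2) / (2*pi)"
proof -
  have cont: "continuous_on {0..2*pi} (trig_series a)"
    by (rule continuous_on_trig_series[OF a])
  have "(\<lambda>N. 2*pi * (\<Sum>n\<in>{-int N..int N}. cnj (a n) * fourier_coeff (trig_series a) n))
           \<longlonglongrightarrow> integral {0..2*pi} (\<lambda>t. trig_series a t * cnj (trig_series a t))"
    by (rule tendsto_integral_mult_cnj_trig_sum[OF a cont])
  moreover have "cnj (a n) * fourier_coeff (trig_series a) n = of_real ((cmod (a n))\<^sup>2)" for n
    by (simp add: fourier_coeff_trig_series[OF a] complex_norm_square mult.commute del: of_real_power)
  ultimately have "(\<lambda>N. complex_of_real (2*pi * (\<Sum>n\<in>{-int N..int N}. (cmod (a n))\<^sup>2)))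
      \<longlonglongrightarrow> of_real (integral {0..2*pi} (\<lambda>t. (cmod (trig_series a t))\<^sup>2))"
    by (simp add: integral_mult_cnj_self[OF cont] del: of_real_power)
  then have "(\<lambda>N. 2*pi * (\<Sum>n\<in>{-int N..int N}. (cmod (a n))\<^sup>2))
      \<longlonglongrightarrow> integral {0..2*pi} (\<lambda>t. (cmod (trig_series a t))\<^sup>2)"
    by (simp only: tendsto_of_real_iff)
  from tendsto_divide[OF this tendsto_const, of "2*pi"] show ?thesis by simp
qed

lemma coeffs_abs_summable_mult_bounded:
  assumes "coeffs_abs_summable a" "\<And>n. norm (b n) \<le> K"
  shows "coeffs_abs_summable (\<lambda>n. a n * b n)"
  using assms(1) unfolding coeffs_abs_summable_def
proof (rule summable_comparison_test'[where N=0, OF summable_mult[of _ K]])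
  fix k :: nat
  have "cmod (a n * b n) \<le> cmod (a n) * K" for n
    unfolding norm_mult by (intro mult_left_mono assms(2)) simp
  then show "norm (cmod (a (int k) * b (int k)) + cmod (a (- int k) * b (- int k)))
      \<le> K * (cmod (a (int k)) + cmod (a (- int k)))"
    by (simp add: algebra_simps add_mono)
qed

lemma trig_series_translate_diff:
  assumes "coeffs_abs_summable a"
  shows "trig_series (\<lambda>n. a n * (fourier_exp n s - 1)) t = trig_series a (t + s) - trig_series a t"
proof -
  have "trig_pair (\<lambda>n. a n * (fourier_exp n s - 1)) k t = trig_pair a k (t + s) - trig_pair a k t" for k
    by (simp add: trig_pair_def fourier_exp_add algebra_simps)
  then show ?thesis
    unfolding trig_series_def by (simp add: suminf_diff summable_trig_pair[OF assms])
qed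

definition coeff_pair_sq :: "(int \<Rightarrow> complex) \<Rightarrow> nat \<Rightarrow> real" where
  "coeff_pair_sq a k = (cmod (a (int k)))\<^sup>2 + (cmod (a (- int k)))\<^sup>2"

lemma sums_integral_translate_diff:
  assumes F: "smooth_periodic F"
  shows "(\<lambda>k. (cmod (cis s ^ k - 1))\<^sup>2 * coeff_pair_sq (fourier_coeff (F 0)) k)
           sums (integral {0..2*pi} (\<lambda>t. (cmod (F 0 (t + s) - F 0 t))\<^sup>2) / (2*pi))"
proof -
  let ?c = "fourier_coeff (F 0)"
  let ?a = "\<lambda>n. ?c n * (fourier_exp n s - 1)"
  have "norm (fourier_exp n s - 1) \<le> 2" for n
    using norm_triangle_ineq4[of "fourier_exp n s" 1] by simp
  then have "coeffs_abs_summable ?a"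
    by (intro coeffs_abs_summable_mult_bounded smooth_periodic_coeffs_abs_summable[OF F])
  from tendsto_parseval_trig_series[OF this]
  have "(\<lambda>N. \<Sum>n\<in>{-int N..int N}. (cmod (?a n))\<^sup>2)
      \<longlonglongrightarrow> integral {0..2*pi} (\<lambda>t. (cmod (F 0 (t + s) - F 0 t))\<^sup>2) / (2*pi)"
    by (simp add: trig_series_translate_diff smooth_periodic_coeffs_abs_summable[OF F]
        trig_series_fourier_coeff[OF F])
  moreover have "(\<Sum>n\<in>{-int N..int N}. (cmod (?a n))\<^sup>2) = (\<Sum>k<Suc N.
      (cmod (cis s ^ k - 1))\<^sup>2 * ((cmod (?c (int k)))\<^sup>2 + (cmod (?c (- int k)))\<^sup>2))" for N
  proof -
    have sym: "cmod (fourier_exp (- n) s - 1) = cmod (fourier_exp n s - 1)" for n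
      by (metis cnj_fourier_exp complex_cnj_diff complex_cnj_one complex_mod_cnj)
    show ?thesis
      unfolding sum_int_symmetric
      by (intro sum.cong refl) (simp only: norm_mult power_mult_distrib sym fourier_exp_of_nat, simp add: algebra_simps)
  qed
  ultimately have "(\<lambda>N. \<Sum>k<Suc N. (cmod (cis s ^ k - 1))\<^sup>2 *
      ((cmod (?c (int k)))\<^sup>2 + (cmod (?c (- int k)))\<^sup>2))
      \<longlonglongrightarrow> integral {0..2*pi} (\<lambda>t. (cmod (F 0 (t + s) - F 0 t))\<^sup>2) / (2*pi)"
    by simp
  then show ?thesis
    unfolding sums_def coeff_pair_sq_def by (rule LIMSEQ_imp_Suc)
qed

section \<open>The Gagliardo seminorm of a smooth function\<close>

lemma nn_integral_periodic_translate:
  fixes G :: "real \<Rightarrow> ennreal"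
  assumes [measurable]: "G \<in> borel_measurable borel" and per: "\<And>y. G (y + 2*pi) = G y"
    and x: "x \<in> {0..2*pi}"
  shows "(\<integral>\<^sup>+t. G (x + t) * indicator {0..2*pi} t \<partial>lborel) = (\<integral>\<^sup>+y. G y * indicator {0..2*pi} y \<partial>lborel)"
proof -
  have "(\<integral>\<^sup>+y. G y * indicator {x..x+2*pi} y \<partial>lborel)
        = (\<integral>\<^sup>+t. G (x + t) * indicator {x..x+2*pi} (x + t) \<partial>lborel)"
    using nn_integral_real_affine[of "\<lambda>y. G y * indicator {x..x+2*pi} y" 1 x] by simp
  also have "\<dots> = (\<integral>\<^sup>+t. G (x + t) * indicator {0..2*pi} t \<partial>lborel)"
    by (intro nn_integral_cong) (auto simp: indicator_def)
  finally have 1: "(\<integral>\<^sup>+t. G (x + t) * indicator {0..2*pi} t \<partial>lborel) = (\<integral>\<^sup>+y. G y * indicator {x..x+2*pi} y \<partial>lborel)" ..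
  have "(\<integral>\<^sup>+y. G y * indicator {x..x+2*pi} y \<partial>lborel)
      = (\<integral>\<^sup>+y. G y * indicator {x..<2*pi} y + G y * indicator {2*pi..x+2*pi} y \<partial>lborel)"
    using x by (intro nn_integral_cong) (auto simp: indicator_def)
  also have "\<dots> = (\<integral>\<^sup>+y. G y * indicator {x..<2*pi} y \<partial>lborel) + (\<integral>\<^sup>+y. G y * indicator {2*pi..x+2*pi} y \<partial>lborel)"
    by (rule nn_integral_add) auto
  also have "(\<integral>\<^sup>+y. G y * indicator {2*pi..x+2*pi} y \<partial>lborel)
       = (\<integral>\<^sup>+s. G (2*pi + s) * indicator {2*pi..x+2*pi} (2*pi + s) \<partial>lborel)"
    using nn_integral_real_affine[of "\<lambda>y. G y * indicator {2*pi..x+2*pi} y" 1 "2*pi"] by simp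
  also have "\<dots> = (\<integral>\<^sup>+s. G s * indicator {0..x} s \<partial>lborel)"
    by (intro nn_integral_cong) (auto simp: indicator_def per add.commute)
  also have "(\<integral>\<^sup>+y. G y * indicator {x..<2*pi} y \<partial>lborel) + (\<integral>\<^sup>+s. G s * indicator {0..x} s \<partial>lborel)
      = (\<integral>\<^sup>+y. G y * indicator {x..<2*pi} y + G y * indicator {0..x} y \<partial>lborel)"
    by (rule nn_integral_add[symmetric]) auto
  also have "\<dots> = (\<integral>\<^sup>+y. G y * indicator {0..2*pi} y \<partial>lborel)"
  proof (rule nn_integral_cong_AE)
    show "AE y in lborel. G y * indicator {x..<2*pi} y + G y * indicator {0..x} y = G y * indicator {0..2*pi} y"
      using AE_lborel_singleton[of "2*pi"] AE_lborel_singleton[of x]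
      by eventually_elim (use x in \<open>auto simp: indicator_def\<close>)
  qed
  finally show ?thesis using 1 by simp
qed

lemma cis_neq_1: "t \<in> {0<..<2*pi} \<Longrightarrow> cis t \<noteq> 1"
  using Arg2pi_cis[of t] Arg2pi_cis[of 0] by auto

text \<open>\<open>k\<close> times the Fejer kernel of order \<open>k\<close>: \<open>|1 + z + \<dots> + z\<^sup>k\<^sup>-\<^sup>1|\<^sup>2\<close> at \<open>z = e\<^sup>i\<^sup>t\<close>.\<close>

definition fejer_kernel :: "nat \<Rightarrow> real \<Rightarrow> real" where
  "fejer_kernel k t = (cmod (cis t ^ k - 1))\<^sup>2 / (cmod (cis t - 1))\<^sup>2"

lemma nn_integral_fejer_kernel:
  "(\<integral>\<^sup>+t. ennreal (fejer_kernel k t) * indicator {0..2*pi} t \<partial>lborel) = ennreal (2*pi * real k)"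
proof -
  define P where "P t = (\<Sum>n\<in>int ` {..<k}. 1 * fourier_exp n t)" for t
  have P: "P t = (\<Sum>j<k. cis t ^ j)" for t
    unfolding P_def by (subst sum.reindex) (auto simp: fourier_exp_of_nat)
  have eq: "fejer_kernel k t = (cmod (P t))\<^sup>2" if "t \<in> {0<..<2*pi}" for t
    unfolding fejer_kernel_def P geometric_sum[OF cis_neq_1[OF that]]
    by (simp add: norm_divide power_divide)
  have "integral {0..2*pi} (\<lambda>t. (cmod (P t))\<^sup>2) = 2*pi * real k"
    unfolding P_def by (subst integral_norm_sq_trig_poly) (auto simp: card_image)
  moreover have "(\<lambda>t. (cmod (P t))\<^sup>2) integrable_on {0..2*pi}"
    unfolding P_def by (intro integrable_continuous_real continuous_intros)
  ultimately have integral_P: "((\<lambda>t. (cmod (P t))\<^sup>2) has_integral (2*pi * real k)) {0..2*pi}"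
    by (metis integrable_integral)
  have "(\<integral>\<^sup>+t. ennreal (fejer_kernel k t) * indicator {0..2*pi} t \<partial>lborel)
      = (\<integral>\<^sup>+t. ennreal (indicator {0..2*pi} t * (cmod (P t))\<^sup>2) \<partial>lborel)"
  proof (rule nn_integral_cong_AE)
    show "AE t in lborel. ennreal (fejer_kernel k t) * indicator {0..2*pi} t
        = ennreal (indicator {0..2*pi} t * (cmod (P t))\<^sup>2)"
      using AE_lborel_singleton[of 0] AE_lborel_singleton[of "2*pi"]
    proof eventually_elim
      case (elim t)
      then show ?case
        by (cases "t \<in> {0<..<2*pi}") (auto simp: eq indicator_def)
    qed
  qed
  also have "\<dots> = ennreal (2*pi * real k)"
    by (rule nn_integral_has_integral_lebesgue[OF _ integral_P]) simp
  finally show ?thesis .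
qed

lemma norm_cis_diff_translate: "cmod (cis x - cis (x + t)) = cmod (cis t - 1)"
proof -
  have "cis x - cis (x + t) = - cis x * (cis t - 1)" by (simp add: cis_mult algebra_simps)
  then show ?thesis by (simp add: norm_mult)
qed

lemma H12_sq_eq_nn_integral_translate:
  assumes [measurable]: "(\<lambda>x. h (cis x)) \<in> borel_measurable borel"
  shows "H12_sq h = (\<integral>\<^sup>+t. (\<integral>\<^sup>+x. ennreal ((cmod (h (cis x) - h (cis (x + t))))\<^sup>2 / (cmod (cis t - 1))\<^sup>2)
                          * indicator {0..2*pi} x \<partial>lborel) * indicator {0..2*pi} t \<partial>lborel)"
proof -
  define \<Phi> where "\<Phi> x y = ennreal ((cmod (h (cis x) - h (cis y)))\<^sup>2 / (cmod (cis x - cis y))\<^sup>2)" for x y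
  have [measurable]: "\<Phi> x \<in> borel_measurable borel" for x
    unfolding \<Phi>_def by measurable
  have "H12_sq h = (\<integral>\<^sup>+x. (\<integral>\<^sup>+y. \<Phi> x y * indicator {0..2*pi} y \<partial>lborel) * indicator {0..2*pi} x \<partial>lborel)"
    unfolding H12_sq_def \<Phi>_def ..
  also have "\<dots> = (\<integral>\<^sup>+x. (\<integral>\<^sup>+t. \<Phi> x (x + t) * indicator {0..2*pi} t \<partial>lborel) * indicator {0..2*pi} x \<partial>lborel)"
  proof (intro nn_integral_cong)
    fix x :: real
    have "\<Phi> x (y + 2*pi) = \<Phi> x y" for y
      by (simp add: \<Phi>_def cis_mult[symmetric])
    then show "(\<integral>\<^sup>+y. \<Phi> x y * indicator {0..2*pi} y \<partial>lborel) * indicator {0..2*pi} x =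
          (\<integral>\<^sup>+t. \<Phi> x (x + t) * indicator {0..2*pi} t \<partial>lborel) * indicator {0..2*pi} x"
      by (cases "x \<in> {0..2*pi}") (simp_all add: nn_integral_periodic_translate)
  qed
  also have "\<dots> = (\<integral>\<^sup>+x. (\<integral>\<^sup>+t. \<Phi> x (x + t) * indicator {0..2*pi} t * indicator {0..2*pi} x \<partial>lborel) \<partial>lborel)"
    by (intro nn_integral_cong nn_integral_multc[symmetric]) measurable
  also have "\<dots> = (\<integral>\<^sup>+t. (\<integral>\<^sup>+x. \<Phi> x (x + t) * indicator {0..2*pi} t * indicator {0..2*pi} x \<partial>lborel) \<partial>lborel)"
    by (rule lborel_pair.Fubini'[symmetric]) (unfold \<Phi>_def, measurable)
  also have "\<dots> = (\<integral>\<^sup>+t. (\<integral>\<^sup>+x. \<Phi> x (x + t) * indicator {0..2*pi} x \<partial>lborel) * indicator {0..2*pi} t \<partial>lborel)"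
  proof (intro nn_integral_cong)
    fix t
    have "(\<integral>\<^sup>+x. \<Phi> x (x + t) * indicator {0..2*pi} t * indicator {0..2*pi} x \<partial>lborel)
        = (\<integral>\<^sup>+x. \<Phi> x (x + t) * indicator {0..2*pi} x * indicator {0..2*pi} t \<partial>lborel)"
      by (simp only: mult_ac)
    also have "\<dots> = (\<integral>\<^sup>+x. \<Phi> x (x + t) * indicator {0..2*pi} x \<partial>lborel) * indicator {0..2*pi} t"
      by (rule nn_integral_multc) (unfold \<Phi>_def, measurable)
    finally show "(\<integral>\<^sup>+x. \<Phi> x (x + t) * indicator {0..2*pi} t * indicator {0..2*pi} x \<partial>lborel)
        = (\<integral>\<^sup>+x. \<Phi> x (x + t) * indicator {0..2*pi} x \<partial>lborel) * indicator {0..2*pi} t" .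
  qed
  finally show ?thesis
    by (simp add: \<Phi>_def norm_cis_diff_translate)
qed

lemma nn_integral_translate_diff_quotient:
  assumes F: "smooth_periodic F" and t: "t \<in> {0<..<2*pi}"
  shows "(\<integral>\<^sup>+x. ennreal ((cmod (F 0 x - F 0 (x + t)))\<^sup>2 / (cmod (cis t - 1))\<^sup>2) * indicator {0..2*pi} x \<partial>lborel)
     = (\<Sum>k. ennreal (2*pi * coeff_pair_sq (fourier_coeff (F 0)) k * fejer_kernel k t))"
proof -
  define K where "K = (cmod (cis t - 1))\<^sup>2"
  have K: "K > 0" unfolding K_def using cis_neq_1[OF t] by simp
  define I where "I = integral {0..2*pi} (\<lambda>x. (cmod (F 0 (x + t) - F 0 x))\<^sup>2)"
  have cont: "continuous_on {0..2*pi} (\<lambda>x. F 0 (x + t) - F 0 x)"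
    by (intro continuous_intros continuous_on_compose2[OF continuous_on_smooth_periodic[OF F]]) auto
  have "((\<lambda>x. (cmod (F 0 (x + t) - F 0 x))\<^sup>2) has_integral I) {0..2*pi}"
    unfolding I_def by (intro integrable_integral integrable_continuous_real continuous_intros cont)
  then have "((\<lambda>x. (cmod (F 0 (x + t) - F 0 x))\<^sup>2 / K) has_integral I / K) {0..2*pi}"
    by (rule has_integral_divide)
  have "(\<integral>\<^sup>+x. ennreal ((cmod (F 0 x - F 0 (x + t)))\<^sup>2 / (cmod (cis t - 1))\<^sup>2) * indicator {0..2*pi} x \<partial>lborel)
      = (\<integral>\<^sup>+x. ennreal (indicator {0..2*pi} x * ((cmod (F 0 (x + t) - F 0 x))\<^sup>2 / K)) \<partial>lborel)"
    by (intro nn_integral_cong) (simp add: K_def norm_minus_commute indicator_def)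
  also have "\<dots> = ennreal (I / K)"
    by (rule nn_integral_has_integral_lebesgue[OF _ \<open>(_ has_integral I / K) _\<close>]) (use K in auto)
  also have "\<dots> = (\<Sum>k. ennreal (2*pi * coeff_pair_sq (fourier_coeff (F 0)) k * fejer_kernel k t))"
  proof (rule suminf_ennreal_eq[symmetric])
    show "(\<lambda>k. 2*pi * coeff_pair_sq (fourier_coeff (F 0)) k * fejer_kernel k t) sums (I / K)"
      using sums_mult[OF sums_integral_translate_diff[OF F], of "2*pi / K" t] K
      by (simp add: I_def K_def fejer_kernel_def field_simps)
  qed (simp add: coeff_pair_sq_def fejer_kernel_def)
  finally show ?thesis .
qed

lemma H12_sq_smooth_periodic:
  assumes F: "smooth_periodic F" and h: "\<And>x. h (cis x) = F 0 x"
  shows "H12_sq h = (\<Sum>k. ennreal (4*pi\<^sup>2 * real k * coeff_pair_sq (fourier_coeff (F 0)) k))"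
proof -
  let ?C = "coeff_pair_sq (fourier_coeff (F 0))"
  have [measurable]: "F 0 \<in> borel_measurable borel"
    by (rule borel_measurable_continuous_onI) (rule continuous_on_smooth_periodic[OF F])
  have [measurable]: "fejer_kernel k \<in> borel_measurable borel" for k
    unfolding fejer_kernel_def by measurable
  have h_measurable: "(\<lambda>x. h (cis x)) \<in> borel_measurable borel"
    by (simp add: h)
  have "H12_sq h = (\<integral>\<^sup>+t. (\<Sum>k. ennreal (2*pi * ?C k) * (ennreal (fejer_kernel k t) * indicator {0..2*pi} t))
      \<partial>lborel)"
    unfolding H12_sq_eq_nn_integral_translate[OF h_measurable] h
  proof (rule nn_integral_cong_AE)
    show "AE t in lborel. (\<integral>\<^sup>+x. ennreal ((cmod (F 0 x - F 0 (x + t)))\<^sup>2 / (cmod (cis t - 1))\<^sup>2)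
            * indicator {0..2*pi} x \<partial>lborel) * indicator {0..2*pi} t
        = (\<Sum>k. ennreal (2*pi * ?C k) * (ennreal (fejer_kernel k t) * indicator {0..2*pi} t))"
      using AE_lborel_singleton[of 0] AE_lborel_singleton[of "2*pi"]
    proof eventually_elim
      case (elim t)
      have "ennreal (2*pi * ?C k * fejer_kernel k t) = ennreal (2*pi * ?C k) * ennreal (fejer_kernel k t)" for k
        by (rule ennreal_mult) (simp_all add: coeff_pair_sq_def fejer_kernel_def)
      then show ?case
        using elim nn_integral_translate_diff_quotient[OF F, of t]
        by (cases "t \<in> {0<..<2*pi}") (auto simp: indicator_def)
    qed
  qed
  also have "\<dots> = (\<Sum>k. ennreal (2*pi * ?C k) * ennreal (2*pi * real k))"
    by (simp add: nn_integral_suminf nn_integral_cmult nn_integral_fejer_kernel)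
  also have "\<dots> = (\<Sum>k. ennreal (4*pi\<^sup>2 * real k * ?C k))"
    by (simp add: ennreal_mult'[symmetric] power2_eq_square coeff_pair_sq_def algebra_simps)
  finally show ?thesis .
qed

lemma smooth_S1_map_smooth_periodic:
  assumes "smooth_S1_map v"
  obtains D where "smooth_periodic D" "D 0 = (\<lambda>t. v (cis t))" "\<And>t. norm (D 0 t) = 1"
proof -
  from assms obtain D where D: "D 0 = (\<lambda>t. v (cis t))"
    "\<And>n t. (D n has_vector_derivative D (Suc n) t) (at t)" and unit: "\<And>t. cmod (v (cis t)) = 1"
    unfolding smooth_S1_map_def smooth_real_def by blast
  have "smooth_periodic D"
    unfolding smooth_periodic_def using D by (simp add: cis_mult[symmetric])
  moreover have "norm (D 0 t) = 1" for t
    using unit by (simp add: D(1))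
  ultimately show ?thesis using D(1) that by blast
qed

lemma smooth_periodic_fourier_exp_diff:
  assumes "smooth_periodic D"
  shows "smooth_periodic (\<lambda>n t. (\<i> * of_int m) ^ n * fourier_exp m t - D n t)"
  unfolding smooth_periodic_def
proof (intro conjI allI)
  fix n t
  have "((\<lambda>t. (\<i> * of_int m) ^ n * fourier_exp m t) has_vector_derivative
           (\<i> * of_int m) ^ n * (\<i> * of_int m * fourier_exp m t)) (at t)"
    by (intro has_vector_derivative_mult_right has_vector_derivative_fourier_exp)
  from has_vector_derivative_diff[OF this smooth_periodic_has_vector_derivative[OF assms]]
  show "((\<lambda>t. (\<i> * of_int m) ^ n * fourier_exp m t - D n t) has_vector_derivative
          (\<i> * of_int m) ^ Suc n * fourier_exp m t - D (Suc n) t) (at t)"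
    by (simp add: algebra_simps)
next
  fix t
  show "(\<i> * of_int m) ^ 0 * fourier_exp m (t + 2*pi) - D 0 (t + 2*pi)
      = (\<i> * of_int m) ^ 0 * fourier_exp m t - D 0 t"
    using periodic_fun_simple.plus_period[OF smooth_periodic_periodic[OF assms, of 0]]
    by (simp add: fourier_exp_periodic)
qed

lemma H12_sq_ge_fourier_degree_sum:
  assumes F: "smooth_periodic F" and h: "\<And>x. h (cis x) = F 0 x"
  shows "ennreal (4*pi\<^sup>2 * (\<Sum>n\<in>{-int N..int N}. real_of_int n * (cmod (fourier_coeff (F 0) n))\<^sup>2))
           \<le> H12_sq h"
proof -
  let ?c = "fourier_coeff (F 0)"
  define C where "C k = 4*pi\<^sup>2 * real k * coeff_pair_sq ?c k" for k
  have "4*pi\<^sup>2 * (\<Sum>n\<in>{-int N..int N}. real_of_int n * (cmod (?c n))\<^sup>2)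
      = 4*pi\<^sup>2 * (\<Sum>k<Suc N. real k * (cmod (?c (int k)))\<^sup>2 - real k * (cmod (?c (- int k)))\<^sup>2)"
    unfolding sum_int_symmetric by (intro arg_cong[where f="(*) (4*pi\<^sup>2)"] sum.cong) auto
  also have "\<dots> = (\<Sum>k<Suc N. 4*pi\<^sup>2 *
      (real k * (cmod (?c (int k)))\<^sup>2 - real k * (cmod (?c (- int k)))\<^sup>2))"
    by (rule sum_distrib_left)
  also have "\<dots> \<le> (\<Sum>k<Suc N. C k)"
    unfolding C_def coeff_pair_sq_def by (intro sum_mono) (simp add: algebra_simps)
  finally have "ennreal (4*pi\<^sup>2 * (\<Sum>n\<in>{-int N..int N}. real_of_int n * (cmod (?c n))\<^sup>2))
      \<le> ennreal (\<Sum>k<Suc N. C k)"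
    by (rule ennreal_leI)
  also have "\<dots> = (\<Sum>k<Suc N. ennreal (C k))"
    by (rule sum_ennreal[symmetric]) (simp add: C_def coeff_pair_sq_def)
  also have "\<dots> \<le> (\<Sum>k. ennreal (C k))"
    by (rule sum_le_suminf) auto
  also have "\<dots> = H12_sq h"
    unfolding C_def by (rule H12_sq_smooth_periodic[OF F h, symmetric])
  finally show ?thesis .
qed

lemma sum_index_norm_sq_delta_diff:
  assumes "m \<le> N"
  shows "(\<Sum>n\<in>{-int N..int N}. real_of_int n * (cmod ((if n = int m then 1 else 0) - a n))\<^sup>2)
       = (\<Sum>n\<in>{-int N..int N}. real_of_int n * (cmod (a n))\<^sup>2) + real m * (1 - 2 * Re (a (int m)))"
proof -
  let ?A = "{-int N..int N}"
  have m: "int m \<in> ?A" using assms by auto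
  let ?\<delta> = "\<lambda>n. if n = int m then 1 else 0"
  have "(cmod (1 - a (int m)))\<^sup>2 = (cmod (a (int m)))\<^sup>2 + (1 - 2 * Re (a (int m)))"
    by (simp only: cmod_power2) (simp add: power2_eq_square algebra_simps)
  then have "real m * (cmod (1 - a (int m)))\<^sup>2
      = real m * (cmod (a (int m)))\<^sup>2 + real m * (1 - 2 * Re (a (int m)))"
    by (simp add: distrib_left)
  moreover have "(\<Sum>n\<in>?A - {int m}. real_of_int n * (cmod (?\<delta> n - a n))\<^sup>2)
      = (\<Sum>n\<in>?A - {int m}. real_of_int n * (cmod (a n))\<^sup>2)"
    by (intro sum.cong) auto
  ultimately show ?thesis
    using sum.remove[OF _ m, of "\<lambda>n. real_of_int n * (cmod (?\<delta> n - a n))\<^sup>2"]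
      sum.remove[OF _ m, of "\<lambda>n. real_of_int n * (cmod (a n))\<^sup>2"]
    by (simp add: algebra_simps)
qed

lemma H12_sq_monomial_diff_smooth_ge:
  assumes v: "smooth_S1_map v" and deg: "smooth_degree v = of_int d"
  shows "ennreal (4*pi\<^sup>2 * real_of_int (d - int m)) \<le> H12_sq (\<lambda>z. z ^ m - v z)"
proof -
  obtain D where D: "smooth_periodic D" and Dv: "D 0 = (\<lambda>t. v (cis t))"
    and unit: "\<And>t. norm (D 0 t) = 1"
    using smooth_S1_map_smooth_periodic[OF v] by blast
  let ?a = "fourier_coeff (D 0)"
  let ?S = "\<lambda>N. \<Sum>n\<in>{-int N..int N}. real_of_int n * (cmod (?a n))\<^sup>2"
  define F where "F = (\<lambda>n t. (\<i> * of_int (int m)) ^ n * fourier_exp (int m) t - D n t)"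
  have F: "smooth_periodic F"
    unfolding F_def by (rule smooth_periodic_fourier_exp_diff[OF D])
  have h: "cis x ^ m - v (cis x) = F 0 x" for x
    by (simp add: F_def Dv fourier_exp_of_nat)
  have c: "fourier_coeff (F 0) n = (if n = int m then 1 else 0) - ?a n" for n
    using fourier_coeff_diff[OF continuous_on_fourier_exp continuous_on_smooth_periodic[OF D]]
    by (simp add: F_def fourier_coeff_fourier_exp cong: if_cong)
  have "cmod (?a (int m)) \<le> 1"
    by (rule norm_fourier_coeff_le[OF continuous_on_smooth_periodic[OF D]]) (simp add: unit)
  then have "real m * Re (?a (int m)) \<le> real m * 1"
    using abs_Re_le_cmod[of "?a (int m)"] by (intro mult_left_mono) auto
  then have "4*pi\<^sup>2 * (?S N - real m)
      \<le> 4*pi\<^sup>2 * (\<Sum>n\<in>{-int N..int N}. real_of_int n * (cmod (fourier_coeff (F 0) n))\<^sup>2)"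
    if "m \<le> N" for N
    by (intro mult_left_mono) (simp_all add: c sum_index_norm_sq_delta_diff[OF that] algebra_simps)
  then have bound: "ennreal (4*pi\<^sup>2 * (?S N - real m)) \<le> H12_sq (\<lambda>z. z ^ m - v z)" if "m \<le> N" for N
    using that by (intro order_trans[OF ennreal_leI H12_sq_ge_fourier_degree_sum[OF F h]])
  have "?S \<longlonglongrightarrow> real_of_int d"
    using deg by (intro tendsto_degree_fourier_sum[OF D unit]) (simp add: smooth_degree_def Dv)
  then have "(\<lambda>N. ennreal (4*pi\<^sup>2 * (?S N - real m))) \<longlonglongrightarrow> ennreal (4*pi\<^sup>2 * real_of_int (d - int m))"
    by (intro tendsto_ennrealI tendsto_mult_left) (simp add: tendsto_diff)
  then show ?thesis
    by (rule LIMSEQ_le_const2) (use bound in auto)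
qed

section \<open>Passing to the limit\<close>

lemma norm_add_sq_le:
  fixes A B :: "'a::real_normed_vector"
  assumes e: "e > 0"
  shows "(norm (A + B))\<^sup>2 \<le> (1 + e) * (norm A)\<^sup>2 + (1 + 1/e) * (norm B)\<^sup>2"
proof -
  have "0 \<le> (e * norm A - norm B)\<^sup>2 / e"
    using e by simp
  also have "\<dots> = e * (norm A)\<^sup>2 - 2 * norm A * norm B + (norm B)\<^sup>2 / e"
    using e by (simp add: power2_eq_square field_simps)
  finally have "2 * norm A * norm B \<le> e * (norm A)\<^sup>2 + (norm B)\<^sup>2 / e" by simp
  moreover have "(norm (A + B))\<^sup>2 \<le> (norm A + norm B)\<^sup>2"
    by (intro power_mono norm_triangle_ineq) simp
  ultimately show ?thesis
    by (simp add: power2_sum distrib_right)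
qed

lemma ennreal_norm_add_sq_div_le:
  fixes A B :: "'a::real_normed_vector"
  assumes e: "e > 0" and K: "K \<ge> 0"
  shows "ennreal ((norm (A + B))\<^sup>2 / K)
    \<le> ennreal (1 + e) * ennreal ((norm A)\<^sup>2 / K) + ennreal (1 + 1/e) * ennreal ((norm B)\<^sup>2 / K)"
proof -
  have "(norm (A + B))\<^sup>2 / K \<le> (1 + e) * ((norm A)\<^sup>2 / K) + (1 + 1/e) * ((norm B)\<^sup>2 / K)"
    using divide_right_mono[OF norm_add_sq_le[OF e] K] by (simp add: add_divide_distrib)
  then have "ennreal ((norm (A + B))\<^sup>2 / K)
      \<le> ennreal ((1 + e) * ((norm A)\<^sup>2 / K) + (1 + 1/e) * ((norm B)\<^sup>2 / K))"
    by (rule ennreal_leI)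
  also have "\<dots> = ennreal ((1 + e) * ((norm A)\<^sup>2 / K)) + ennreal ((1 + 1/e) * ((norm B)\<^sup>2 / K))"
    by (rule ennreal_plus) (use e K in simp_all)
  also have "\<dots> = ennreal (1 + e) * ennreal ((norm A)\<^sup>2 / K) + ennreal (1 + 1/e) * ennreal ((norm B)\<^sup>2 / K)"
    using e K by (simp only: ennreal_mult divide_nonneg_nonneg zero_le_power2 order_less_imp_le
        add_nonneg_nonneg zero_le_one zero_le_divide_1_iff)
  finally show ?thesis .
qed

lemma nn_integral_iterated_le_combination:
  fixes P Q R :: "real \<Rightarrow> real \<Rightarrow> ennreal"
  assumes [measurable]: "(\<lambda>(x, y). P x y) \<in> borel_measurable (borel \<Otimes>\<^sub>M borel)"
    "(\<lambda>(x, y). Q x y) \<in> borel_measurable (borel \<Otimes>\<^sub>M borel)" "S \<in> sets borel"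
    and le: "\<And>x y. R x y \<le> a * P x y + b * Q x y"
  shows "(\<integral>\<^sup>+x. (\<integral>\<^sup>+y. R x y * indicator S y \<partial>lborel) * indicator S x \<partial>lborel)
    \<le> a * (\<integral>\<^sup>+x. (\<integral>\<^sup>+y. P x y * indicator S y \<partial>lborel) * indicator S x \<partial>lborel)
      + b * (\<integral>\<^sup>+x. (\<integral>\<^sup>+y. Q x y * indicator S y \<partial>lborel) * indicator S x \<partial>lborel)"
proof -
  have [measurable]: "P x \<in> borel_measurable borel" "Q x \<in> borel_measurable borel" for x
    by measurable
  have "(\<integral>\<^sup>+x. (\<integral>\<^sup>+y. R x y * indicator S y \<partial>lborel) * indicator S x \<partial>lborel)
      \<le> (\<integral>\<^sup>+x. (\<integral>\<^sup>+y. a * (P x y * indicator S y) + b * (Q x y * indicator S y) \<partial>lborel)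
            * indicator S x \<partial>lborel)"
    by (intro nn_integral_mono mult_right_mono) (auto simp: indicator_def le)
  also have "\<dots> = (\<integral>\<^sup>+x. a * ((\<integral>\<^sup>+y. P x y * indicator S y \<partial>lborel) * indicator S x)
      + b * ((\<integral>\<^sup>+y. Q x y * indicator S y \<partial>lborel) * indicator S x) \<partial>lborel)"
  proof (intro nn_integral_cong)
    fix x
    have "(\<integral>\<^sup>+y. a * (P x y * indicator S y) + b * (Q x y * indicator S y) \<partial>lborel)
        = (\<integral>\<^sup>+y. a * (P x y * indicator S y) \<partial>lborel) + (\<integral>\<^sup>+y. b * (Q x y * indicator S y) \<partial>lborel)"
      by (rule nn_integral_add) measurable
    also have "\<dots> = a * (\<integral>\<^sup>+y. P x y * indicator S y \<partial>lborel) + b * (\<integral>\<^sup>+y. Q x y * indicator S y \<partial>lborel)"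
      by (subst (1 2) nn_integral_cmult) auto
    finally show "(\<integral>\<^sup>+y. a * (P x y * indicator S y) + b * (Q x y * indicator S y) \<partial>lborel) * indicator S x
        = a * ((\<integral>\<^sup>+y. P x y * indicator S y \<partial>lborel) * indicator S x)
          + b * ((\<integral>\<^sup>+y. Q x y * indicator S y \<partial>lborel) * indicator S x)"
      by (simp only: distrib_right mult.assoc)
  qed
  also have "\<dots> = a * (\<integral>\<^sup>+x. (\<integral>\<^sup>+y. P x y * indicator S y \<partial>lborel) * indicator S x \<partial>lborel)
      + b * (\<integral>\<^sup>+x. (\<integral>\<^sup>+y. Q x y * indicator S y \<partial>lborel) * indicator S x \<partial>lborel)"
    by (simp add: nn_integral_add nn_integral_cmult)
  finally show ?thesis .
qed

lemma H12_sq_add_le: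
  assumes [measurable]: "(\<lambda>x. p (cis x)) \<in> borel_measurable borel" "(\<lambda>x. q (cis x)) \<in> borel_measurable borel"
    and e: "e > 0"
  shows "H12_sq (\<lambda>z. p z + q z) \<le> ennreal (1 + e) * H12_sq p + ennreal (1 + 1/e) * H12_sq q"
proof -
  have "ennreal ((cmod (p (cis x) + q (cis x) - (p (cis y) + q (cis y))))\<^sup>2 / (cmod (cis x - cis y))\<^sup>2)
      \<le> ennreal (1 + e) * ennreal ((cmod (p (cis x) - p (cis y)))\<^sup>2 / (cmod (cis x - cis y))\<^sup>2)
        + ennreal (1 + 1/e) * ennreal ((cmod (q (cis x) - q (cis y)))\<^sup>2 / (cmod (cis x - cis y))\<^sup>2)"
    for x y
    using ennreal_norm_add_sq_div_le[OF e, where A="p (cis x) - p (cis y)" and B="q (cis x) - q (cis y)"]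
    by (simp add: algebra_simps)
  then show ?thesis
    unfolding H12_sq_def by (rule nn_integral_iterated_le_combination[rotated 3]) measurable
qed

lemma H12_sq_minus_commute: "H12_sq (\<lambda>z. g z - v z) = H12_sq (\<lambda>z. v z - g z)"
proof -
  have "cmod ((g x - v x) - (g y - v y)) = cmod ((v x - g x) - (v y - g y))" for x y :: complex
  proof -
    have "(g x - v x) - (g y - v y) = - ((v x - g x) - (v y - g y))" by simp
    then show ?thesis by (simp only: norm_minus_cancel)
  qed
  then show ?thesis unfolding H12_sq_def by simp
qed

lemma ennreal_le_if_le_one_plus_eps:
  assumes "\<And>e. e > 0 \<Longrightarrow> ennreal c \<le> ennreal (1 + e) * X" "c \<ge> 0"
  shows "ennreal c \<le> X"
proof (cases "X = top")
  case True then show ?thesis by simp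
next
  case False
  then obtain x where x: "X = ennreal x" "x \<ge> 0" by (cases X) auto
  have "c \<le> x + e" if e: "e > 0" for e
  proof -
    define e' where "e' = e / (x + 1)"
    have e': "e' > 0" unfolding e'_def using e x by simp
    have "ennreal c \<le> ennreal ((1 + e') * x)"
      using assms(1)[OF e'] x e' by (simp add: ennreal_mult)
    then have "c \<le> (1 + e') * x" using x e' by (simp add: ennreal_le_iff)
    also have "(1 + e') * x = x + e * (x / (x + 1))" unfolding e'_def by (simp add: field_simps)
    also have "e * (x / (x + 1)) \<le> e * 1"
      using x e by (intro mult_left_mono) auto
    finally show ?thesis by simp
  qed
  then have "c \<le> x" by (rule field_le_epsilon)
  then show ?thesis using x by (simp add: ennreal_leI)
qed

lemma H12_sq_ge_of_approximation:
  assumes [measurable]: "(\<lambda>x. f (cis x)) \<in> borel_measurable borel" "(\<lambda>x. g (cis x)) \<in> borel_measurable borel"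
    and [measurable]: "\<And>n. (\<lambda>x. v n (cis x)) \<in> borel_measurable borel"
    and bound: "\<And>n. ennreal c \<le> H12_sq (\<lambda>z. f z - v n z)"
    and lim: "(\<lambda>n. H12_sq (\<lambda>z. v n z - g z)) \<longlonglongrightarrow> 0"
    and "c \<ge> 0"
  shows "ennreal c \<le> H12_sq (\<lambda>z. f z - g z)"
proof (rule ennreal_le_if_le_one_plus_eps[OF _ \<open>c \<ge> 0\<close>])
  fix e :: real assume e: "e > 0"
  let ?X = "H12_sq (\<lambda>z. f z - g z)"
  have "ennreal c \<le> ennreal (1 + e) * ?X + ennreal (1 + 1/e) * H12_sq (\<lambda>z. v n z - g z)" for n
  proof -
    have "ennreal c \<le> H12_sq (\<lambda>z. (f z - g z) + (g z - v n z))"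
      using bound[of n] by simp
    also have "\<dots> \<le> ennreal (1 + e) * ?X + ennreal (1 + 1/e) * H12_sq (\<lambda>z. g z - v n z)"
      by (rule H12_sq_add_le[OF _ _ e]) measurable
    finally show ?thesis
      by (simp only: H12_sq_minus_commute[of g "v n"])
  qed
  moreover have "(\<lambda>n. ennreal (1 + e) * ?X + ennreal (1 + 1/e) * H12_sq (\<lambda>z. v n z - g z))
      \<longlonglongrightarrow> ennreal (1 + e) * ?X"
    using tendsto_add[OF tendsto_const ennreal_tendsto_cmult[OF _ lim]] by simp
  ultimately show "ennreal c \<le> ennreal (1 + e) * ?X"
    by (intro LIMSEQ_le_const) auto
qed

lemma borel_measurable_smooth_S1_map:
  assumes "smooth_S1_map v"
  shows "(\<lambda>x. v (cis x)) \<in> borel_measurable borel"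
proof -
  obtain D where D: "smooth_periodic D" "D 0 = (\<lambda>t. v (cis t))"
    using smooth_S1_map_smooth_periodic[OF assms] by blast
  have "D 0 \<in> borel_measurable borel"
    by (rule borel_measurable_continuous_onI) (rule continuous_on_smooth_periodic[OF D(1)])
  then show ?thesis using D(2) by simp
qed

theorem proposition6p1:
  fixes d1 d2 :: int and g :: "complex \<Rightarrow> complex"
  assumes "0 \<le> d1" and "d1 < d2"
    and "g \<in> E_deg d2"
  shows "ennreal (4 * pi\<^sup>2 * real_of_int (d2 - d1)) \<le> H12_sq (\<lambda>z. z ^ nat d1 - g z)"
proof -
  from assms(3) have "(\<lambda>x. g (cis x)) \<in> borel_measurable lborel" and "H12_degree g d2"
    unfolding E_deg_def in_H12_S1_def in_H12_def by auto
  then obtain v where v: "\<And>n. smooth_S1_map (v n)" "\<And>n. smooth_degree (v n) = of_int d2"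
    and lim: "(\<lambda>n. H12_sq (\<lambda>z. v n z - g z)) \<longlonglongrightarrow> 0"
    unfolding H12_degree_def by blast
  have d1: "d1 = int (nat d1)" using assms(1) by simp
  show ?thesis
  proof (rule H12_sq_ge_of_approximation[OF _ _ borel_measurable_smooth_S1_map[OF v(1)] _ lim])
    show "(\<lambda>x. cis x ^ nat d1) \<in> borel_measurable borel" by measurable
    show "(\<lambda>x. g (cis x)) \<in> borel_measurable borel"
      using \<open>(\<lambda>x. g (cis x)) \<in> borel_measurable lborel\<close> by simp
    show "ennreal (4 * pi\<^sup>2 * real_of_int (d2 - d1)) \<le> H12_sq (\<lambda>z. z ^ nat d1 - v n z)" for n
      by (subst (1) d1) (rule H12_sq_monomial_diff_smooth_ge[OF v])
  qed (use assms(2) in simp)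
qed

end
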